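(* Let $\mathcal{H}$ be a real Hilbert space of dimension $d>1$, $T\ge1$ an integer, $G>0$, $\mathcal{G}=\{g\in\mathcal{H}:\|g\|\le G\}$, $W>0$, $p\in[1,2]$, $f(x)=\frac{W}{p}|x|^p$ and $B(\theta)=f(\|\theta\|)$. Define $f_t(x)=\frac{W}{p}\big(x^2+(T-t)G^2\big)^{p/2}$. Then $f_t(\|\theta\|)$ is the conditional value $V_t(\theta)$ of the game, and the minimax optimal strategy is \[ w_{t+1}=\nabla V_t(\theta_t)=\theta_t\,\frac{f'\big(\sqrt{\|\theta_t\|^2+G^2(T-t)}\big)}{\sqrt{\|\theta_t\|^2+G^2(T-t)}}. \] If $p\in(1,2]$, letting $q\ge2$ with $1/p+1/q=1$, this strategy guarantees, for every sequence $g_1,\dots,g_T\in\mathcal{G}$ and every $u\in\mathcal{H}$, \[ \operatorname{Regret}(u)\ \le\ \frac{1}{W^{q-1}q}\|u\|^q+\frac{W}{p}\big(G\sqrt{T}\big)^p\ \le\ \Big(\frac1p+\frac1q\|u\|^q\Big)G\sqrt{T}, \] where the second inequality holds when $W=(G\sqrt{T})^{1-p}$. For all $u$, the bound $\big(\frac1p+\frac1q\|u\|^q\big)G\sqrt{T}$ is minimized (over $p\in(1,2]$) by taking $p=2$. For $p=1$, for all $u$ with $\|u\|\le W$, $\operatorname{Regret}(u)\le WG\sqrt{T}$.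
   Context: Online linear optimization game with known horizon $T$: on rounds $t=1,\dots,T$ the player chooses $w_t\in\mathcal{H}$, the adversary chooses $g_t\in\mathcal{G}$, the player suffers $\langle w_t,g_t\rangle$. Let $\theta_t=-\sum_{s=1}^t g_s$ ($\theta_0=0$). $\operatorname{Regret}(u)=\sum_{t=1}^T\langle g_t,w_t-u\rangle$. The conditional value of the game is $V_T(\theta)=B(\theta)$ and $V_t(\theta)=\min_{w\in\mathcal{H}}\max_{g\in\mathcal{G}}\big(\langle g,w\rangle+V_{t+1}(\theta-g)\big)$ for $t=T-1,\dots,0$. *)

theory Defs
  imports "HOL-Analysis.Analysis"
begin

text \<open>Conditional value of the online linear optimization game.
  cv B Gs k theta is the value with k rounds remaining; min/max are rendered as Inf/Sup.
  cv B Gs 0 theta = B theta, and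
  cv B Gs (Suc k) theta = min over w of max over g in Gs of (inner g w + cv B Gs k (theta - g)).\<close>
primrec cv :: "('a::real_inner \<Rightarrow> real) \<Rightarrow> 'a set \<Rightarrow> nat \<Rightarrow> 'a \<Rightarrow> real" where
  "cv B Gs 0 \<theta> = B \<theta>"
| "cv B Gs (Suc k) \<theta> = (INF w. SUP g\<in>Gs. inner g w + cv B Gs k (\<theta> - g))"

text \<open>V_t(theta) for a game of horizon T (meaningful for t <= T).\<close>
definition cond_value :: "('a::real_inner \<Rightarrow> real) \<Rightarrow> 'a set \<Rightarrow> nat \<Rightarrow> nat \<Rightarrow> 'a \<Rightarrow> real" where
  "cond_value B Gs T t \<theta> = cv B Gs (T - t) \<theta>"

definition theta :: "(nat \<Rightarrow> 'a::real_vector) \<Rightarrow> nat \<Rightarrow> 'a" where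
  "theta g t = - (\<Sum>s=1..t. g s)"

definition regret :: "nat \<Rightarrow> (nat \<Rightarrow> 'a::real_inner) \<Rightarrow> (nat \<Rightarrow> 'a) \<Rightarrow> 'a \<Rightarrow> real" where
  "regret T g w u = (\<Sum>t=1..T. inner (g t) (w t - u))"

end

theory Submission
  imports Defs
begin

text \<open>The conditional values are the potentials V_t(\<theta>) = W/p (|\<theta>|^2 + (T - t) G^2)^(p/2),
  by backward induction on t. One round of the recursion is a minimax identity: against the
  gradient of the current potential, concavity of s \<mapsto> s^(p/2) (p \<le> 2) bounds the value of
  every move g of the adversary by the current potential, and in dimension at least two the
  adversary can answer any w with a g of norm G orthogonal to \<theta> and nonnegative against w,
  which attains that value. Summing the one-round inequalities telescopes the loss of the
  strategy to V_0(0) - W/p |\<theta>_T|^p, and the comparator term \<langle>\<theta>_T, u\<rangle> is absorbed by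
  Young's inequality (p > 1) or by Cauchy-Schwarz (p = 1, |u| \<le> W).\<close>

lemma powr_le_tangent:
  fixes x y r :: real
  assumes "0 \<le> r" "r \<le> 1" "0 < x" "0 \<le> y"
  shows "y powr r \<le> x powr r + r * x powr (r - 1) * (y - x)"
proof (cases "y = 0")
  case True
  have "x powr (r - 1) * x = x powr r" using assms by (simp add: powr_diff field_simps)
  then show ?thesis using True assms by (simp add: algebra_simps)
next
  case False
  then have "y powr r * x powr (1 - r) \<le> r * y + (1 - r) * x"
    using Youngs_inequality_0[of r "1 - r" y x] assms by simp
  then have "y powr r * x powr (1 - r) * x powr (r - 1) \<le> (r * y + (1 - r) * x) * x powr (r - 1)"
    by (rule mult_right_mono) simp
  moreover have "x powr (1 - r) * x powr (r - 1) = 1" using assms by (simp flip: powr_add)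
  moreover have "x powr (r - 1) * x = x powr r" using assms by (simp add: powr_diff field_simps)
  ultimately show ?thesis by (simp add: algebra_simps)
qed

lemma power2_powr_half: "(x\<^sup>2) powr (p / 2) = \<bar>x\<bar> powr p" for x p :: real
proof -
  have "(x\<^sup>2) powr (p / 2) = ((x\<^sup>2) powr (1 / 2)) powr p" unfolding powr_powr by simp
  then show ?thesis by (simp only: square_powr_half)
qed

lemma conjugate_exponent:
  fixes p q :: real
  assumes "1 < p" "1 / p + 1 / q = 1"
  shows "1 < q" "p + q = p * q"
proof -
  have "q \<noteq> 0" using assms by auto
  then show pq: "p + q = p * q" using assms by (simp add: field_simps)
  then have "q * (p - 1) = p * 1" by (simp add: algebra_simps)
  moreover have "p * 1 > 1 * (p - 1)" by simp
  ultimately have "q * (p - 1) > 1 * (p - 1)" by simp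
  then show "1 < q" using assms(1) by (simp only: mult_less_cancel_right)
qed

lemma Youngs_inequality_inner:
  fixes \<theta> u :: "'a::real_inner" and W p q :: real
  assumes p: "1 < p" and q: "1 / p + 1 / q = 1" and W: "0 < W"
  shows "inner \<theta> u - W / p * norm \<theta> powr p \<le> norm u powr q / (W powr (q - 1) * q)"
proof -
  have q1: "1 < q" and pq: "p + q = p * q" using conjugate_exponent[OF p q] by auto
  define a where "a = W powr (1 / p) * norm \<theta>"
  define b where "b = norm u / W powr (1 / p)"
  have "a powr p = W * norm \<theta> powr p"
    using p W by (simp add: a_def powr_mult powr_powr)
  moreover have "b powr q = norm u powr q / W powr (q - 1)"
  proof -
    have "q / p = q - 1" using p pq by (simp add: field_simps)
    then show ?thesis using W by (simp add: b_def powr_divide powr_powr)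
  qed
  moreover have "inner \<theta> u \<le> a * b"
    using norm_cauchy_schwarz[of \<theta> u] W by (simp add: a_def b_def)
  moreover have "a * b \<le> a powr p / p + b powr q / q"
    by (rule Youngs_inequality[OF p q1 q]) (use W in \<open>simp_all add: a_def b_def\<close>)
  ultimately show ?thesis by simp
qed

lemma exists_not_in_span_singleton:
  fixes x y \<theta> :: "'a::real_vector"
  assumes "independent {x, y}" "x \<noteq> y"
  shows "\<exists>v. v \<notin> span {\<theta>}"
proof (rule ccontr)
  assume "\<nexists>v. v \<notin> span {\<theta>}"
  then have "dim {x, y} \<le> card {\<theta>}" by (intro dim_le_card) auto
  moreover have "dim {x, y} = 2"
    using dim_span_eq_card_independent[OF assms(1)] assms(2) by simp
  ultimately show False by simp
qed

lemma exists_orthogonal_of_norm: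
  fixes \<theta> w :: "'a::real_inner" and G :: real
  assumes dim: "\<exists>x y::'a. independent {x, y} \<and> x \<noteq> y" and G: "0 \<le> G"
  shows "\<exists>g. norm g = G \<and> inner g \<theta> = 0 \<and> 0 \<le> inner g w"
proof -
  obtain v where v: "v \<notin> span {\<theta>}"
    using dim exists_not_in_span_singleton by blast
  define z where "z = v - (inner v \<theta> / inner \<theta> \<theta>) *\<^sub>R \<theta>"
  have "z \<noteq> 0"
    using v by (metis z_def eq_iff_diff_eq_0 span_base span_scale singletonI)
  moreover have z\<theta>: "inner z \<theta> = 0"
    by (cases "\<theta> = 0") (simp_all add: z_def inner_diff_left)
  define g where "g = (if 0 \<le> inner z w then G / norm z else - G / norm z) *\<^sub>R z"
  ultimately show ?thesis
    using G by (intro exI[of _ g])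
      (auto simp: g_def z\<theta> intro!: divide_nonpos_pos mult_nonneg_nonpos)
qed

text \<open>With c = (T - t) G^2, potential W p c is V_t and potential_grad W p c is its gradient,
  the strategy w_{t+1} of the statement.\<close>

definition potential :: "real \<Rightarrow> real \<Rightarrow> real \<Rightarrow> 'a::real_normed_vector \<Rightarrow> real" where
  "potential W p c \<theta> = W / p * ((norm \<theta>)\<^sup>2 + c) powr (p / 2)"

definition potential_grad :: "real \<Rightarrow> real \<Rightarrow> real \<Rightarrow> 'a::real_normed_vector \<Rightarrow> 'a" where
  "potential_grad W p c \<theta> = (W * ((norm \<theta>)\<^sup>2 + c) powr (p / 2 - 1)) *\<^sub>R \<theta>"

lemma potential_0_eq: "potential W p 0 \<theta> = W / p * norm \<theta> powr p"
  by (simp add: potential_def power2_powr_half)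

lemma has_derivative_potential:
  fixes \<theta> :: "'a::real_inner"
  assumes "0 < (norm \<theta>)\<^sup>2 + c" "p \<noteq> 0"
  shows "(potential W p c has_derivative (\<lambda>h. inner (potential_grad W p c \<theta>) h)) (at \<theta>)"
proof -
  have eq: "potential W p c = (\<lambda>x. W / p * (inner x x + c) powr (p / 2))"
    by (simp add: potential_def power2_norm_eq_inner fun_eq_iff)
  have "((\<lambda>x. inner x x + c) has_derivative (\<lambda>h. inner \<theta> h + inner h \<theta>)) (at \<theta>)"
    by (intro has_derivative_add_const has_derivative_inner has_derivative_ident)
  moreover have "((\<lambda>s. W / p * s powr (p / 2)) has_real_derivative
      W / p * (p / 2 * (inner \<theta> \<theta> + c) powr (p / 2 - 1))) (at (inner \<theta> \<theta> + c))"
    using assms(1) by (intro DERIV_cmult has_real_derivative_powr) (simp_all add: power2_norm_eq_inner)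
  ultimately have "((\<lambda>x. W / p * (inner x x + c) powr (p / 2)) has_derivative
      (\<lambda>h. (inner \<theta> h + inner h \<theta>) * (W / p * (p / 2 * (inner \<theta> \<theta> + c) powr (p / 2 - 1))))) (at \<theta>)"
    by (rule DERIV_compose_FDERIV[rotated])
  moreover have "(inner \<theta> h + inner h \<theta>) * (W / p * (p / 2 * (inner \<theta> \<theta> + c) powr (p / 2 - 1)))
      = inner (potential_grad W p c \<theta>) h" for h
    using assms(2) by (simp add: potential_grad_def power2_norm_eq_inner inner_commute)
  ultimately show ?thesis unfolding eq by simp
qed

lemma potential_step_le:
  fixes \<theta> g :: "'a::real_inner"
  assumes p: "0 < p" "p \<le> 2" and W: "0 \<le> W" and c: "0 \<le> c" and G: "0 < G" and g: "norm g \<le> G"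
  shows "inner g (potential_grad W p (G\<^sup>2 + c) \<theta>) + potential W p c (\<theta> - g)
    \<le> potential W p (G\<^sup>2 + c) \<theta>"
proof -
  define X where "X = (norm \<theta>)\<^sup>2 + (G\<^sup>2 + c)"
  define \<sigma> where "\<sigma> = inner g \<theta>"
  have X: "0 < X" using G c by (simp add: X_def add_nonneg_pos add_pos_nonneg)
  have "(norm (\<theta> - g))\<^sup>2 = (norm \<theta>)\<^sup>2 - 2 * \<sigma> + (norm g)\<^sup>2"
    using dot_norm_neg[of \<theta> g] by (simp add: \<sigma>_def inner_commute)
  moreover have "(norm g)\<^sup>2 \<le> G\<^sup>2" using g by (simp add: power_mono)
  ultimately have Y: "(norm (\<theta> - g))\<^sup>2 + c \<le> X - 2 * \<sigma>" by (simp add: X_def)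
  then have Y0: "0 \<le> X - 2 * \<sigma>" using c zero_le_power2[of "norm (\<theta> - g)"] by linarith
  have "((norm (\<theta> - g))\<^sup>2 + c) powr (p / 2) \<le> (X - 2 * \<sigma>) powr (p / 2)"
    using Y c p by (intro powr_mono2) auto
  also have "\<dots> \<le> X powr (p / 2) + p / 2 * X powr (p / 2 - 1) * ((X - 2 * \<sigma>) - X)"
    using p X Y0 by (intro powr_le_tangent) auto
  finally have "W / p * ((norm (\<theta> - g))\<^sup>2 + c) powr (p / 2)
      \<le> W / p * (X powr (p / 2) - p * X powr (p / 2 - 1) * \<sigma>)"
    using W p by (intro mult_left_mono) (auto simp: algebra_simps)
  also have "\<dots> = W / p * X powr (p / 2) - W * X powr (p / 2 - 1) * \<sigma>"
    using p by (simp add: right_diff_distrib)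
  finally show ?thesis
    by (simp add: potential_def potential_grad_def X_def[symmetric] \<sigma>_def inner_commute)
qed

lemma potential_step_ge:
  fixes \<theta> w :: "'a::real_inner"
  assumes dim: "\<exists>x y::'a. independent {x, y} \<and> x \<noteq> y" and G: "0 \<le> G"
  shows "\<exists>g. norm g = G \<and> potential W p (G\<^sup>2 + c) \<theta> \<le> inner g w + potential W p c (\<theta> - g)"
proof -
  obtain g where g: "norm g = G" "inner g \<theta> = 0" "0 \<le> inner g w"
    using exists_orthogonal_of_norm[OF dim G] by blast
  then have "(norm (\<theta> - g))\<^sup>2 = (norm \<theta>)\<^sup>2 + G\<^sup>2"
    using dot_norm_neg[of \<theta> g] by (simp add: inner_commute)
  then show ?thesis
    using g by (intro exI[of _ g]) (simp add: potential_def add.assoc)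
qed


lemma minimax_potential_step:
  fixes \<theta> :: "'a::real_inner"
  assumes p: "0 < p" "p \<le> 2" and W: "0 \<le> W" and G: "0 < G" and c: "0 \<le> c"
    and dim: "\<exists>x y::'a. independent {x, y} \<and> x \<noteq> y"
  shows "(SUP g\<in>cball 0 G. inner g (potential_grad W p (G\<^sup>2 + c) \<theta>) + potential W p c (\<theta> - g))
      = potential W p (G\<^sup>2 + c) \<theta>"
    and "(INF w. SUP g\<in>cball 0 G. inner g w + potential W p c (\<theta> - g)) = potential W p (G\<^sup>2 + c) \<theta>"
proof -
  define V where "V = potential W p (G\<^sup>2 + c) \<theta>"
  define w\<^sub>0 where "w\<^sub>0 = potential_grad W p (G\<^sup>2 + c) \<theta>"
  define S where "S w = (SUP g\<in>cball 0 G. inner g w + potential W p c (\<theta> - g))" for w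
  have le: "inner g w\<^sub>0 + potential W p c (\<theta> - g) \<le> V" if "g \<in> cball 0 G" for g
    using potential_step_le[OF p W c G] that by (simp add: V_def w\<^sub>0_def)
  have bdd: "bdd_above ((\<lambda>g. inner g w + potential W p c (\<theta> - g)) ` cball 0 G)" for w
  proof (rule bdd_aboveI2)
    fix g :: 'a assume g: "g \<in> cball 0 G"
    have "inner g (w - w\<^sub>0) \<le> G * norm (w - w\<^sub>0)"
      using norm_cauchy_schwarz[of g "w - w\<^sub>0"] g mult_right_mono[of "norm g" G "norm (w - w\<^sub>0)"]
      by simp
    then show "inner g w + potential W p c (\<theta> - g) \<le> V + G * norm (w - w\<^sub>0)"
      using le[OF g] by (simp add: inner_diff_right)
  qed
  have ge: "V \<le> S w" for w
  proof -
    obtain g where "norm g = G" "V \<le> inner g w + potential W p c (\<theta> - g)"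
      using potential_step_ge[OF dim less_imp_le[OF G], where \<theta>=\<theta> and w=w and W=W and p=p and c=c] by (auto simp: V_def)
    then show ?thesis unfolding S_def by (intro cSUP_upper2[OF bdd, of g]) auto
  qed
  have "S w\<^sub>0 \<le> V" unfolding S_def using G le by (intro cSUP_least) auto
  then have Sw\<^sub>0: "S w\<^sub>0 = V" using ge by (rule antisym)
  then show "(SUP g\<in>cball 0 G. inner g (potential_grad W p (G\<^sup>2 + c) \<theta>) + potential W p c (\<theta> - g))
      = potential W p (G\<^sup>2 + c) \<theta>"
    by (simp add: S_def V_def w\<^sub>0_def)
  have "(INF w. S w) = V"
  proof (rule antisym)
    have "bdd_below (range S)" using ge by (rule bdd_belowI2)
    then show "(INF w. S w) \<le> V" by (rule cINF_lower2[of _ _ w\<^sub>0]) (simp_all add: Sw\<^sub>0)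
    show "V \<le> (INF w. S w)" using ge by (intro cINF_greatest) auto
  qed
  then show "(INF w. SUP g\<in>cball 0 G. inner g w + potential W p c (\<theta> - g)) = potential W p (G\<^sup>2 + c) \<theta>"
    by (simp add: S_def V_def)
qed

lemma cv_eq_potential:
  fixes B :: "'a::real_inner \<Rightarrow> real"
  assumes p: "0 < p" "p \<le> 2" and W: "0 \<le> W" and G: "0 < G"
    and dim: "\<exists>x y::'a. independent {x, y} \<and> x \<noteq> y"
    and B: "\<And>\<theta>. B \<theta> = W / p * norm \<theta> powr p"
  shows "cv B (cball 0 G) k \<theta> = potential W p (real k * G\<^sup>2) \<theta>"
proof (induction k arbitrary: \<theta>)
  case 0
  show ?case by (simp add: B potential_0_eq)
next
  case (Suc k)
  have "cv B (cball 0 G) (Suc k) \<theta> = (INF w. SUP g\<in>cball 0 G. inner g w + potential W p (real k * G\<^sup>2) (\<theta> - g))"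
    by (simp add: Suc.IH)
  also have "\<dots> = potential W p (G\<^sup>2 + real k * G\<^sup>2) \<theta>"
    using G by (intro minimax_potential_step(2)[OF p W G _ dim]) simp
  finally show ?case by (simp add: algebra_simps)
qed

lemma sum_inner_potential_grad_le:
  fixes g :: "nat \<Rightarrow> 'a::real_inner"
  assumes p: "0 < p" "p \<le> 2" and W: "0 \<le> W" and G: "0 < G"
    and g: "\<forall>t\<in>{1..T}. norm (g t) \<le> G" and n: "n \<le> T"
  shows "(\<Sum>t=1..n. inner (g t) (potential_grad W p (real (T - (t - 1)) * G\<^sup>2) (theta g (t - 1))))
    \<le> potential W p (real T * G\<^sup>2) (0::'a) - potential W p (real (T - n) * G\<^sup>2) (theta g n)"
  using n
proof (induction n)
  case 0
  show ?case by (simp add: theta_def)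
next
  case (Suc n)
  have c: "real (T - n) * G\<^sup>2 = G\<^sup>2 + real (T - Suc n) * G\<^sup>2"
    using Suc.prems by (simp add: algebra_simps)
  have "inner (g (Suc n)) (potential_grad W p (real (T - n) * G\<^sup>2) (theta g n))
      + potential W p (real (T - Suc n) * G\<^sup>2) (theta g n - g (Suc n))
      \<le> potential W p (real (T - n) * G\<^sup>2) (theta g n)"
    unfolding c using g Suc.prems by (intro potential_step_le[OF p W _ G]) auto
  moreover have "theta g (Suc n) = theta g n - g (Suc n)"
    by (simp add: theta_def)
  ultimately show ?case using Suc by simp
qed

lemma regret_potential_grad_le:
  fixes g w :: "nat \<Rightarrow> 'a::real_inner"
  assumes p: "0 < p" "p \<le> 2" and W: "0 \<le> W" and G: "0 < G"
    and g: "\<forall>t\<in>{1..T}. norm (g t) \<le> G"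
    and w: "\<forall>t\<in>{1..T}. w t = potential_grad W p (real (T - (t - 1)) * G\<^sup>2) (theta g (t - 1))"
  shows "regret T g w u
    \<le> W / p * (G * sqrt (real T)) powr p - W / p * norm (theta g T) powr p + inner (theta g T) u"
proof -
  have "regret T g w u = (\<Sum>t=1..T. inner (g t) (w t)) + inner (theta g T) u"
    by (simp add: regret_def theta_def inner_diff_right sum_subtractf inner_sum_left)
  moreover have "(\<Sum>t=1..T. inner (g t) (w t))
      \<le> potential W p (real T * G\<^sup>2) (0::'a) - potential W p (real (T - T) * G\<^sup>2) (theta g T)"
    using sum_inner_potential_grad_le[OF p W G g order_refl] w by simp
  moreover have "potential W p (real T * G\<^sup>2) (0::'a) = W / p * (G * sqrt (real T)) powr p"
    using power2_powr_half[of "G * sqrt (real T)" p] G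
    by (simp add: potential_def power_mult_distrib mult.commute)
  ultimately show ?thesis by (simp add: potential_0_eq)
qed


lemma regret_potential_grad_le_Young:
  fixes g w :: "nat \<Rightarrow> 'a::real_inner"
  assumes p: "1 < p" "p \<le> 2" and q: "1 / p + 1 / q = 1" and W: "0 < W" and G: "0 < G"
    and g: "\<forall>t\<in>{1..T}. norm (g t) \<le> G"
    and w: "\<forall>t\<in>{1..T}. w t = potential_grad W p (real (T - (t - 1)) * G\<^sup>2) (theta g (t - 1))"
  shows "regret T g w u \<le> norm u powr q / (W powr (q - 1) * q) + W / p * (G * sqrt (real T)) powr p"
  using regret_potential_grad_le[OF _ p(2) _ G g w, of u] Youngs_inequality_inner[OF p(1) q W, of "theta g T" u]
    p W by simp

lemma regret_potential_grad_le_linear: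
  fixes g w :: "nat \<Rightarrow> 'a::real_inner"
  assumes W: "0 \<le> W" and G: "0 < G" and u: "norm u \<le> W"
    and g: "\<forall>t\<in>{1..T}. norm (g t) \<le> G"
    and w: "\<forall>t\<in>{1..T}. w t = potential_grad W 1 (real (T - (t - 1)) * G\<^sup>2) (theta g (t - 1))"
  shows "regret T g w u \<le> W * G * sqrt (real T)"
proof -
  have "inner (theta g T) u \<le> W * norm (theta g T)"
    using norm_cauchy_schwarz[of "theta g T" u] mult_left_mono[OF u norm_ge_zero[of "theta g T"]]
    by (simp add: mult.commute)
  then show ?thesis
    using regret_potential_grad_le[OF _ _ W G g w, of u] G by simp
qed

lemma bound_at_tuned_learning_rate:
  fixes A p q x :: real
  assumes p: "1 < p" and q: "1 / p + 1 / q = 1" and A: "0 < A" and W: "W = A powr (1 - p)"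
  shows "x / (W powr (q - 1) * q) + W / p * A powr p = (1 / p + 1 / q * x) * A"
proof -
  have "p + q = p * q" using conjugate_exponent(2)[OF p q] .
  then have "(1 - p) * (q - 1) = -1" by (simp add: algebra_simps)
  then have Wq: "W powr (q - 1) = inverse A" using A by (simp add: W powr_powr powr_minus)
  have "x / (W powr (q - 1) * q) = x * A / q" unfolding Wq using A by (simp add: field_simps)
  moreover have "W / p * A powr p = A / p" using A by (simp add: W flip: powr_add)
  ultimately show ?thesis by (simp add: algebra_simps)
qed

lemma quadratic_le_conjugate_bound:
  fixes x p q :: real
  assumes p: "1 < p" "p \<le> 2" and q: "1 / p + 1 / q = 1"
  shows "1 / 2 + 1 / 2 * x powr 2 \<le> 1 / p + 1 / q * x powr q"
proof -
  have "1 < q" using conjugate_exponent(1)[OF p(1) q] .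
  have "1 / 2 \<le> 1 / p" using p by (simp add: field_simps)
  then have "1 / q \<le> 1 / 2" using q by linarith
  then have q2: "2 \<le> q" using \<open>1 < q\<close> by (simp add: field_simps)
  \<comment> \<open>concavity of s \<mapsto> s^(2/q) at s = 1, applied to s = x^q\<close>
  have "(x powr q) powr (2 / q) \<le> 1 powr (2 / q) + 2 / q * 1 powr (2 / q - 1) * (x powr q - 1)"
    using q2 by (intro powr_le_tangent) auto
  then have "x powr 2 \<le> 1 + 2 / q * (x powr q - 1)"
    using q2 by (simp add: powr_powr)
  then have "1 / 2 * x powr 2 \<le> 1 / 2 + (x powr q - 1) / q" by (simp add: mult.commute)
  moreover have "1 / p + 1 / q * x powr q = 1 + (x powr q - 1) / q"
    using q by (simp add: diff_divide_distrib)
  ultimately show ?thesis by linarith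
qed

lemma deriv_abs_powr_sqrt:
  fixes W p X :: real assumes "p \<noteq> 0" "0 < X"
  shows "deriv (\<lambda>x. W / p * \<bar>x\<bar> powr p) (sqrt X) / sqrt X = W * X powr (p / 2 - 1)"
proof -
  define s where "s = sqrt X"
  have s: "0 < s" using assms by (simp add: s_def)
  have "((\<lambda>x. W / p * x powr p) has_real_derivative W / p * (p * s powr (p - 1))) (at s)"
    using s by (intro DERIV_cmult has_real_derivative_powr) auto
  then have "((\<lambda>x. W / p * \<bar>x\<bar> powr p) has_real_derivative W / p * (p * s powr (p - 1))) (at s)"
    by (rule has_field_derivative_transform_within_open[of _ _ _ "{0<..}"]) (use s in auto)
  then have "deriv (\<lambda>x. W / p * \<bar>x\<bar> powr p) s / s = W * s powr (p - 1) / s"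
    using assms(1) by (simp add: DERIV_imp_deriv)
  also have "\<dots> = W * s powr (p - 2)"
    using s by (simp add: powr_diff power2_eq_square)
  also have "s powr (p - 2) = X powr (p / 2 - 1)"
    using assms by (simp add: s_def powr_half_sqrt[symmetric] powr_powr diff_divide_distrib)
  finally show ?thesis by (simp add: s_def)
qed

theorem corollary9:
  fixes W G p :: real and T :: nat
    and f :: "real \<Rightarrow> real" and B :: "'a::{real_inner, complete_space} \<Rightarrow> real"
    and ft :: "nat \<Rightarrow> real \<Rightarrow> real" and wstar :: "nat \<Rightarrow> 'a \<Rightarrow> 'a"
  assumes dim: "\<exists>x y::'a. independent {x, y} \<and> x \<noteq> y"
    and T: "T \<ge> 1" and G: "G > 0" and W: "W > 0" and p: "1 \<le> p" "p \<le> 2"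
    and f_def: "\<And>x. f x = W / p * \<bar>x\<bar> powr p"
    and B_def: "\<And>\<theta>. B \<theta> = f (norm \<theta>)"
    and ft_def: "\<And>t x. ft t x = W / p * (x\<^sup>2 + real (T - t) * G\<^sup>2) powr (p / 2)"
    and wstar_def: "\<And>t \<theta>. wstar t \<theta> =
          (deriv f (sqrt ((norm \<theta>)\<^sup>2 + G\<^sup>2 * real (T - t)))
            / sqrt ((norm \<theta>)\<^sup>2 + G\<^sup>2 * real (T - t))) *\<^sub>R \<theta>"
  shows
    \<comment> \<open>f_t(norm theta) is the conditional value V_t(theta)\<close>
    "(\<forall>t\<le>T. \<forall>\<theta>. cond_value B (cball 0 G) T t \<theta> = ft t (norm \<theta>))
     \<comment> \<open>the strategy is the gradient of V_t and is minimax optimal (attains the min in V_t)\<close>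
     \<and> (\<forall>t<T. \<forall>\<theta>. (cond_value B (cball 0 G) T t has_derivative (\<lambda>h. inner (wstar t \<theta>) h)) (at \<theta>)
            \<and> (SUP g\<in>cball 0 G. inner g (wstar t \<theta>) + cond_value B (cball 0 G) T (Suc t) (\<theta> - g))
                = cond_value B (cball 0 G) T t \<theta>)
     \<comment> \<open>regret bounds for p in (1,2]\<close>
     \<and> (1 < p \<longrightarrow> (\<forall>q. 1 / p + 1 / q = 1 \<longrightarrow>
          (\<forall>g u. (\<forall>t\<in>{1..T}. norm (g t) \<le> G) \<longrightarrow>
             regret T g (\<lambda>t. wstar (t - 1) (theta g (t - 1))) u
               \<le> norm u powr q / (W powr (q - 1) * q) + W / p * (G * sqrt (real T)) powr p)
          \<and> (W = (G * sqrt (real T)) powr (1 - p) \<longrightarrow> (\<forall>u::'a.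
               norm u powr q / (W powr (q - 1) * q) + W / p * (G * sqrt (real T)) powr p
                 \<le> (1 / p + 1 / q * norm u powr q) * G * sqrt (real T)))))
     \<comment> \<open>p = 2 minimizes the bound over p in (1,2]\<close>
     \<and> (\<forall>u::'a. \<forall>p' q'. 1 < p' \<and> p' \<le> 2 \<and> 1 / p' + 1 / q' = 1 \<longrightarrow>
          (1 / 2 + 1 / 2 * norm u powr 2) * G * sqrt (real T)
            \<le> (1 / p' + 1 / q' * norm u powr q') * G * sqrt (real T))
     \<comment> \<open>p = 1\<close>
     \<and> (p = 1 \<longrightarrow> (\<forall>g u. (\<forall>t\<in>{1..T}. norm (g t) \<le> G) \<longrightarrow> norm u \<le> W \<longrightarrow>
          regret T g (\<lambda>t. wstar (t - 1) (theta g (t - 1))) u \<le> W * G * sqrt (real T)))"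
proof -
  have p0: "0 < p" using p by simp
  have f: "f = (\<lambda>x. W / p * \<bar>x\<bar> powr p)" using f_def by (simp add: fun_eq_iff)
  have V: "cond_value B (cball 0 G) T t \<theta> = potential W p (real (T - t) * G\<^sup>2) \<theta>" for t \<theta>
    unfolding cond_value_def using p0 p(2) W G dim
    by (intro cv_eq_potential) (simp_all add: B_def f_def)
  have remaining: "real (T - t) * G\<^sup>2 = G\<^sup>2 + real (T - Suc t) * G\<^sup>2" if "t < T" for t
    using that by (simp add: algebra_simps)
  have w: "wstar t \<theta> = potential_grad W p (real (T - t) * G\<^sup>2) \<theta>" if "t < T" for t \<theta>
  proof -
    have "0 < (norm \<theta>)\<^sup>2 + G\<^sup>2 * real (T - t)" using that G by (simp add: add_nonneg_pos)
    then show ?thesis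
      using deriv_abs_powr_sqrt[of p "(norm \<theta>)\<^sup>2 + G\<^sup>2 * real (T - t)" W] p0
      by (simp add: wstar_def f potential_grad_def mult.commute)
  qed
  have strategy: "\<forall>t\<in>{1..T}. wstar (t - 1) (theta g (t - 1))
      = potential_grad W p (real (T - (t - 1)) * G\<^sup>2) (theta g (t - 1))" for g :: "nat \<Rightarrow> 'a"
  proof
    fix t assume "t \<in> {1..T}"
    then show "wstar (t - 1) (theta g (t - 1))
        = potential_grad W p (real (T - (t - 1)) * G\<^sup>2) (theta g (t - 1))"
      by (intro w) auto
  qed
  have A: "0 < G * sqrt (real T)" using G T by simp
  show ?thesis
  proof (intro conjI allI impI)
    fix t \<theta>
    show "cond_value B (cball 0 G) T t \<theta> = ft t (norm \<theta>)"
      by (simp add: V potential_def ft_def)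
  next
    fix t \<theta> assume t: "t < T"
    show "(cond_value B (cball 0 G) T t has_derivative (\<lambda>h. inner (wstar t \<theta>) h)) (at \<theta>)"
      using t G p0 by (simp add: V[abs_def] w add_nonneg_pos has_derivative_potential)
    show "(SUP g\<in>cball 0 G. inner g (wstar t \<theta>) + cond_value B (cball 0 G) T (Suc t) (\<theta> - g))
        = cond_value B (cball 0 G) T t \<theta>"
      using minimax_potential_step(1)[OF p0 p(2) _ G _ dim, of W "real (T - Suc t) * G\<^sup>2" \<theta>] W
      by (simp add: V w[OF t] remaining[OF t])
  next
    fix q :: real and g :: "nat \<Rightarrow> 'a" and u :: 'a
    assume "1 < p" "1 / p + 1 / q = 1" "\<forall>t\<in>{1..T}. norm (g t) \<le> G"
    then show "regret T g (\<lambda>t. wstar (t - 1) (theta g (t - 1))) u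
        \<le> norm u powr q / (W powr (q - 1) * q) + W / p * (G * sqrt (real T)) powr p"
      using strategy[of g] by (intro regret_potential_grad_le_Young[OF _ p(2) _ W G])
  next
    fix q :: real and u :: 'a
    assume "1 < p" "1 / p + 1 / q = 1" "W = (G * sqrt (real T)) powr (1 - p)"
    from bound_at_tuned_learning_rate[OF this(1,2) A this(3), of "norm u powr q"]
    show "norm u powr q / (W powr (q - 1) * q) + W / p * (G * sqrt (real T)) powr p
        \<le> (1 / p + 1 / q * norm u powr q) * G * sqrt (real T)"
      by (simp add: mult.assoc)
  next
    fix u :: 'a and p' q' :: real assume "1 < p' \<and> p' \<le> 2 \<and> 1 / p' + 1 / q' = 1"
    then have "1 / 2 + 1 / 2 * norm u powr 2 \<le> 1 / p' + 1 / q' * norm u powr q'"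
      by (intro quadratic_le_conjugate_bound) auto
    from mult_right_mono[OF this less_imp_le[OF A]]
    show "(1 / 2 + 1 / 2 * norm u powr 2) * G * sqrt (real T)
        \<le> (1 / p' + 1 / q' * norm u powr q') * G * sqrt (real T)"
      by (simp add: mult.assoc)
  next
    fix g :: "nat \<Rightarrow> 'a" and u :: 'a
    assume "p = 1" "\<forall>t\<in>{1..T}. norm (g t) \<le> G" "norm u \<le> W"
    then show "regret T g (\<lambda>t. wstar (t - 1) (theta g (t - 1))) u \<le> W * G * sqrt (real T)"
      using strategy[of g] W G by (intro regret_potential_grad_le_linear) simp_all
  qed
qed

end
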